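(* Let $P$ be a poset, $f$ a downward closure operator on $P$, and $x,y\in P$ with $x<y$. Assume $f^{-1}(x)=\{x\}$. Then \[ |(x,y)_P|\simeq\begin{cases}|(x,y)_{\operatorname{Fix} f}| & \text{if } y\in\operatorname{Fix} f,\\ \mathrm{pt} & \text{otherwise.}\end{cases}\]
   Context: A downward closure operator on a poset $P$ is an order-preserving map $f:P\to P$ with $f(z)\le z$ for all $z\in P$ and $f\circ f=f$. $\operatorname{Fix} f=\{z\in P: f(z)=z\}$, regarded as a poset with the restricted order. For a poset $Q$, $|Q|$ is the geometric realization of its order complex (simplices are finite nonempty chains), and $(x,y)_Q=\{z\in Q:x<z<y\}$. $\simeq$ denotes homotopy equivalence and $\mathrm{pt}$ the one-point space. *)

theory Defs
  imports "HOL-Analysis.Analysis"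
begin

definition Fix :: "('a \<Rightarrow> 'a) \<Rightarrow> 'a set" where
  "Fix f = {z. f z = z}"

text \<open>Finite nonempty chains of a subset S of a poset (the simplices of the order complex).\<close>
definition is_simplex :: "'a::order set \<Rightarrow> 'a set \<Rightarrow> bool" where
  "is_simplex S \<sigma> \<longleftrightarrow> finite \<sigma> \<and> \<sigma> \<noteq> {} \<and> \<sigma> \<subseteq> S \<and>
     (\<forall>a\<in>\<sigma>. \<forall>b\<in>\<sigma>. a \<le> b \<or> b \<le> a)"

text \<open>Points of the geometric realization: barycentric coordinate functions whose
  support is a simplex.\<close>
definition realization_points :: "'a::order set \<Rightarrow> ('a \<Rightarrow> real) set" where
  "realization_points S = {\<alpha>. (\<forall>z. 0 \<le> \<alpha> z) \<and> is_simplex S {z. \<alpha> z \<noteq> 0} \<and>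
      (\<Sum>z\<in>{z. \<alpha> z \<noteq> 0}. \<alpha> z) = 1}"

definition closed_cell :: "'a::order set \<Rightarrow> 'a set \<Rightarrow> ('a \<Rightarrow> real) set" where
  "closed_cell S \<sigma> = {\<alpha> \<in> realization_points S. {z. \<alpha> z \<noteq> 0} \<subseteq> \<sigma>}"

text \<open>Geometric realization of the order complex of S (with the restricted order),
  carrying the weak (coherent) topology with respect to its closed simplices, each of which
  carries the Euclidean (product) topology.\<close>
definition order_realization :: "'a::order set \<Rightarrow> ('a \<Rightarrow> real) topology" where
  "order_realization S = topology (\<lambda>U. U \<subseteq> realization_points S \<and>
     (\<forall>\<sigma>. is_simplex S \<sigma> \<longrightarrow> openin (subtopology euclidean (closed_cell S \<sigma>)) (U \<inter> closed_cell S \<sigma>)))"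

lemma istopology_order_realization:
  "istopology (\<lambda>U. U \<subseteq> realization_points S \<and>
     (\<forall>\<sigma>. is_simplex S \<sigma> \<longrightarrow> openin (subtopology euclidean (closed_cell S \<sigma>)) (U \<inter> closed_cell S \<sigma>)))"
  (is "istopology ?L")
proof -
  have 1: "?L (U \<inter> V)" if "?L U" "?L V" for U V
  proof -
    have e: "U \<inter> V \<inter> closed_cell S \<sigma> = (U \<inter> closed_cell S \<sigma>) \<inter> (V \<inter> closed_cell S \<sigma>)" for \<sigma> by blast
    show ?thesis unfolding e using that by (auto intro: openin_Int)
  qed
  have 2: "?L (\<Union>K)" if K: "\<forall>U\<in>K. ?L U" for K
  proof -
    have e: "\<Union>K \<inter> closed_cell S \<sigma> = \<Union>((\<lambda>U. U \<inter> closed_cell S \<sigma>) ` K)" for \<sigma> by blast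
    have "openin (subtopology euclidean (closed_cell S \<sigma>)) (\<Union>K \<inter> closed_cell S \<sigma>)"
      if "is_simplex S \<sigma>" for \<sigma>
      unfolding e using K that by (intro openin_Union) blast
    then show ?thesis using K by blast
  qed
  show ?thesis unfolding istopology_def using 1 2 by blast
qed

lemma openin_order_realization:
  "openin (order_realization S) U \<longleftrightarrow> U \<subseteq> realization_points S \<and>
     (\<forall>\<sigma>. is_simplex S \<sigma> \<longrightarrow> openin (subtopology euclidean (closed_cell S \<sigma>)) (U \<inter> closed_cell S \<sigma>))"
  unfolding order_realization_def topology_inverse'[OF istopology_order_realization] ..

end

theory Submission
  imports Defs
begin

text \<open>A monotone map \<open>g\<close> of posets pushes barycentric coordinates forward and so induces a
  continuous map \<open>|g|\<close> of realizations; if \<open>g \<le> h\<close> pointwise then \<open>|g| \<simeq> |h|\<close>. Since the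
  fibre of \<open>f\<close> over \<open>x\<close> is \<open>{x}\<close>, the closure \<open>f\<close> maps \<open>(x,y)\<close> into itself, and \<open>f \<le> id\<close>
  makes \<open>|f|\<close> a deformation retraction of \<open>|(x,y)|\<close> onto \<open>|(x,y) \<inter> Fix f|\<close>. If \<open>y\<close> is not
  fixed, then \<open>f y \<in> (x,y)\<close> and \<open>f z \<le> f y\<close> for all \<open>z\<close>, so \<open>id \<simeq> |f| \<simeq> const (f y)\<close>.\<close>

section \<open>The weak topology of the realization\<close>

abbreviation supp :: "('a \<Rightarrow> real) \<Rightarrow> 'a set" where
  "supp \<alpha> \<equiv> {z. \<alpha> z \<noteq> 0}"

lemma closed_cell_subset: "closed_cell S \<sigma> \<subseteq> realization_points S"
  unfolding closed_cell_def by auto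

lemma topspace_order_realization [simp]: "topspace (order_realization S) = realization_points S"
proof -
  have "openin (order_realization S) (realization_points S)"
    unfolding openin_order_realization by (simp add: closed_cell_subset inf.absorb2)
  then show ?thesis
    using openin_subset openin_order_realization openin_topspace by blast
qed

lemma realization_pointsD:
  assumes "\<alpha> \<in> realization_points S"
  shows "0 \<le> \<alpha> z" "is_simplex S (supp \<alpha>)" "finite (supp \<alpha>)" "sum \<alpha> (supp \<alpha>) = 1"
    "\<alpha> \<in> closed_cell S (supp \<alpha>)"
  using assms unfolding realization_points_def closed_cell_def is_simplex_def by auto

lemma closed_cellD:
  assumes "\<alpha> \<in> closed_cell S \<sigma>"
  shows "\<alpha> \<in> realization_points S" "supp \<alpha> \<subseteq> \<sigma>"
  using assms unfolding closed_cell_def by auto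

lemma closed_cell_eq:
  assumes "is_simplex S \<sigma>"
  shows "closed_cell S \<sigma> = {\<alpha>. (\<forall>z. 0 \<le> \<alpha> z) \<and> (\<forall>z. z \<notin> \<sigma> \<longrightarrow> \<alpha> z = 0) \<and> sum \<alpha> \<sigma> = 1}"
proof (intro set_eqI iffI)
  fix \<alpha> assume "\<alpha> \<in> closed_cell S \<sigma>"
  then have rp: "\<alpha> \<in> realization_points S" and s: "supp \<alpha> \<subseteq> \<sigma>" by (auto dest: closed_cellD)
  have "sum \<alpha> \<sigma> = sum \<alpha> (supp \<alpha>)"
    using assms s by (intro sum.mono_neutral_right) (auto simp: is_simplex_def)
  then show "\<alpha> \<in> {\<alpha>. (\<forall>z. 0 \<le> \<alpha> z) \<and> (\<forall>z. z \<notin> \<sigma> \<longrightarrow> \<alpha> z = 0) \<and> sum \<alpha> \<sigma> = 1}"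
    using realization_pointsD[OF rp] s by auto
next
  fix \<alpha> :: "'a \<Rightarrow> real"
  assume "\<alpha> \<in> {\<alpha>. (\<forall>z. 0 \<le> \<alpha> z) \<and> (\<forall>z. z \<notin> \<sigma> \<longrightarrow> \<alpha> z = 0) \<and> sum \<alpha> \<sigma> = 1}"
  then have nonneg: "\<forall>z. 0 \<le> \<alpha> z" and s: "supp \<alpha> \<subseteq> \<sigma>" and one: "sum \<alpha> \<sigma> = 1" by auto
  have fin: "finite \<sigma>" using assms by (simp add: is_simplex_def)
  have e: "sum \<alpha> \<sigma> = sum \<alpha> (supp \<alpha>)"
    using fin s by (intro sum.mono_neutral_right) auto
  with one have "supp \<alpha> \<noteq> {}" by (metis sum.empty zero_neq_one)
  then have "is_simplex S (supp \<alpha>)"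
    using assms s fin finite_subset unfolding is_simplex_def by blast
  then show "\<alpha> \<in> closed_cell S \<sigma>"
    unfolding closed_cell_def realization_points_def using nonneg s e one by auto
qed

lemma continuous_on_coordinate: "continuous_on A (\<lambda>\<alpha>::'a \<Rightarrow> real. \<alpha> z)"
  by (rule continuous_on_subset[OF continuous_on_product_coordinates]) simp

lemma closed_closed_cell:
  assumes "is_simplex S \<sigma>"
  shows "closed (closed_cell S \<sigma>)"
proof -
  have c: "continuous_on UNIV (\<lambda>\<alpha>::'a \<Rightarrow> real. \<alpha> z)" for z by (rule continuous_on_coordinate)
  have "closed {\<alpha>::'a\<Rightarrow>real. \<forall>z. 0 \<le> \<alpha> z}"
    by (intro closed_Collect_all closed_Collect_le continuous_on_const c)
  moreover have "closed {\<alpha>::'a\<Rightarrow>real. \<forall>z. z \<notin> \<sigma> \<longrightarrow> \<alpha> z = 0}"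
    by (intro closed_Collect_all closed_Collect_imp closed_Collect_eq continuous_on_const c) auto
  moreover have "closed {\<alpha>::'a\<Rightarrow>real. sum \<alpha> \<sigma> = 1}"
    by (intro closed_Collect_eq continuous_on_const continuous_on_sum c)
  ultimately show ?thesis
    unfolding closed_cell_eq[OF assms] Collect_conj_eq by (intro closed_Int)
qed

definition supported_points :: "'a::order set \<Rightarrow> 'a set \<Rightarrow> ('a \<Rightarrow> real) set" where
  "supported_points T \<tau> = {\<beta> \<in> realization_points T. supp \<beta> \<subseteq> \<tau>}"

lemma openin_supported_points:
  assumes "finite \<tau>" and U: "openin (order_realization T) U"
  shows "openin (top_of_set (supported_points T \<tau>)) (U \<inter> supported_points T \<tau>)"
proof -
  let ?F = "closed_cell T ` {\<rho>. \<rho> \<subseteq> \<tau> \<and> is_simplex T \<rho>}"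
  have union: "supported_points T \<tau> = \<Union>?F"
  proof
    show "supported_points T \<tau> \<subseteq> \<Union>?F"
    proof
      fix \<beta> assume "\<beta> \<in> supported_points T \<tau>"
      then have "\<beta> \<in> realization_points T" "supp \<beta> \<subseteq> \<tau>" by (auto simp: supported_points_def)
      then show "\<beta> \<in> \<Union>?F" using realization_pointsD(2,5) by blast
    qed
    show "\<Union>?F \<subseteq> supported_points T \<tau>"
      unfolding supported_points_def closed_cell_def by blast
  qed
  have closed_pieces: "closed (C - U)" if "C \<in> ?F" for C
  proof -
    obtain \<rho> where \<rho>: "is_simplex T \<rho>" and C: "C = closed_cell T \<rho>" using \<open>C \<in> ?F\<close> by blast
    have "openin (top_of_set C) (U \<inter> C)" using U \<rho> C by (simp add: openin_order_realization)
    then have "closedin (top_of_set C) (C - U \<inter> C)" by (simp add: closedin_diff)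
    then have "closedin (top_of_set C) (C - U)" by (simp add: Diff_Int)
    then show ?thesis using closed_closed_cell[OF \<rho>] C closedin_closed_trans by blast
  qed
  have "supported_points T \<tau> - U = \<Union>((\<lambda>C. C - U) ` ?F)"
    unfolding union by blast
  also have "closed \<dots>"
    using \<open>finite \<tau>\<close> closed_pieces by (intro closed_Union finite_imageI) auto
  finally have "closed (supported_points T \<tau> - U)" .
  then have "openin (top_of_set (supported_points T \<tau>))
      (supported_points T \<tau> \<inter> - (supported_points T \<tau> - U))"
    by (intro openin_open_Int open_Compl)
  moreover have "supported_points T \<tau> \<inter> - (supported_points T \<tau> - U) = U \<inter> supported_points T \<tau>"
    by blast
  ultimately show ?thesis by simp
qed

lemma openin_order_realization_slice:
  fixes U :: "(real \<times> ('a::order \<Rightarrow> real)) set"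
  assumes U: "\<And>\<sigma>. is_simplex S \<sigma> \<Longrightarrow>
      openin (top_of_set ({0..1} \<times> closed_cell S \<sigma>)) (U \<inter> ({0..1} \<times> closed_cell S \<sigma>))"
    and J: "compact J" "J \<subseteq> {0..1}"
  shows "openin (order_realization S) {\<alpha> \<in> realization_points S. \<forall>t\<in>J. (t, \<alpha>) \<in> U}"
    (is "openin _ ?V")
  unfolding openin_order_realization
proof (intro conjI allI impI)
  fix \<sigma> assume \<sigma>: "is_simplex S \<sigma>"
  show "openin (top_of_set (closed_cell S \<sigma>)) (?V \<inter> closed_cell S \<sigma>)"
  proof (subst openin_subopen, intro ballI)
    fix \<alpha>1 assume \<alpha>1: "\<alpha>1 \<in> ?V \<inter> closed_cell S \<sigma>"
    obtain W where W: "open W" "U \<inter> ({0..1} \<times> closed_cell S \<sigma>) = W \<inter> ({0..1} \<times> closed_cell S \<sigma>)"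
      using U[OF \<sigma>] by (auto simp: openin_open)
    have "J \<times> {\<alpha>1} \<subseteq> W" using \<alpha>1 J W(2) by blast
    then obtain A B where "open B" "\<alpha>1 \<in> B" "J \<subseteq> A" "A \<times> B \<subseteq> W"
      using tube_lemma_left[of euclidean euclidean W J \<alpha>1] W(1) J(1) by auto
    then have "J \<times> B \<subseteq> W" by blast
    show "\<exists>T. openin (top_of_set (closed_cell S \<sigma>)) T \<and> \<alpha>1 \<in> T \<and> T \<subseteq> ?V \<inter> closed_cell S \<sigma>"
    proof (intro exI conjI)
      show "openin (top_of_set (closed_cell S \<sigma>)) (closed_cell S \<sigma> \<inter> B)"
        using \<open>open B\<close> by (rule openin_open_Int)
      show "closed_cell S \<sigma> \<inter> B \<subseteq> ?V \<inter> closed_cell S \<sigma>"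
        using \<open>J \<times> B \<subseteq> W\<close> J(2) W(2) closed_cell_subset by blast
    qed (use \<alpha>1 \<open>\<alpha>1 \<in> B\<close> in blast)
  qed
qed blast

text \<open>The point is a compact neighbourhood \<open>J\<close> of \<open>t0\<close> in \<open>[0,1]\<close>: by the tube lemma the set of
  \<open>\<alpha>\<close> with \<open>J \<times> {\<alpha>} \<subseteq> U\<close> is open in every cell simultaneously.\<close>

lemma openin_interval_prod_order_realization:
  fixes U :: "(real \<times> ('a::order \<Rightarrow> real)) set"
  assumes U_sub: "U \<subseteq> {0..1} \<times> realization_points S"
    and U: "\<And>\<sigma>. is_simplex S \<sigma> \<Longrightarrow>
      openin (top_of_set ({0..1} \<times> closed_cell S \<sigma>)) (U \<inter> ({0..1} \<times> closed_cell S \<sigma>))"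
  shows "openin (prod_topology (top_of_set {0..1::real}) (order_realization S)) U"
  unfolding openin_prod_topology_alt
proof (intro allI impI)
  fix t0 \<alpha>0 assume "(t0, \<alpha>0) \<in> U"
  then have t0: "t0 \<in> {0..1}" and \<alpha>0: "\<alpha>0 \<in> realization_points S" using U_sub by auto
  obtain W where W: "open W"
      "U \<inter> ({0..1} \<times> closed_cell S (supp \<alpha>0)) = W \<inter> ({0..1} \<times> closed_cell S (supp \<alpha>0))"
    using U[OF realization_pointsD(2)[OF \<alpha>0]] by (auto simp: openin_open)
  have "open {t. (t, \<alpha>0) \<in> W}"
    using open_vimage[OF W(1), of "\<lambda>t. (t, \<alpha>0)"] by (simp add: vimage_def continuous_on_Pair)
  moreover have "t0 \<in> {t. (t, \<alpha>0) \<in> W}"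
    using \<open>(t0, \<alpha>0) \<in> U\<close> t0 realization_pointsD(5)[OF \<alpha>0] W(2) by blast
  ultimately obtain \<delta> where "\<delta> > 0" and \<delta>: "ball t0 \<delta> \<subseteq> {t. (t, \<alpha>0) \<in> W}"
    by (meson openE)
  define J where "J = cball t0 (\<delta>/2) \<inter> {0..1::real}"
  have J: "compact J" "J \<subseteq> {0..1}" unfolding J_def by (auto intro: compact_Int_closed)
  define V where "V = {\<alpha> \<in> realization_points S. \<forall>t\<in>J. (t, \<alpha>) \<in> U}"
  have "J \<subseteq> ball t0 \<delta>" using \<open>\<delta> > 0\<close> by (auto simp: J_def dist_commute)
  then have "\<alpha>0 \<in> V"
    using \<delta> \<alpha>0 realization_pointsD(5)[OF \<alpha>0] W(2) J(2) by (auto simp: V_def)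
  show "\<exists>A V. openin (top_of_set {0..1}) A \<and> openin (order_realization S) V \<and>
      t0 \<in> A \<and> \<alpha>0 \<in> V \<and> A \<times> V \<subseteq> U"
  proof (intro exI conjI)
    show "openin (order_realization S) V"
      unfolding V_def using U J by (rule openin_order_realization_slice)
    show "openin (top_of_set {0..1}) ({0..1} \<inter> ball t0 (\<delta>/2))"
      by (rule openin_open_Int) simp
    show "({0..1} \<inter> ball t0 (\<delta>/2)) \<times> V \<subseteq> U"
      by (auto simp: V_def J_def)
  qed (use t0 \<open>\<delta> > 0\<close> \<open>\<alpha>0 \<in> V\<close> in auto)
qed

lemma continuous_map_interval_prod_order_realization:
  fixes H :: "real \<times> ('a::order \<Rightarrow> real) \<Rightarrow> ('b::order \<Rightarrow> real)"
  assumes cont: "\<And>\<sigma>. is_simplex S \<sigma> \<Longrightarrow> continuous_on ({0..1} \<times> closed_cell S \<sigma>) H"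
    and bounded: "\<And>\<sigma>. is_simplex S \<sigma> \<Longrightarrow>
      \<exists>\<tau>. finite \<tau> \<and> H ` ({0..1} \<times> closed_cell S \<sigma>) \<subseteq> supported_points T \<tau>"
  shows "continuous_map (prod_topology (top_of_set {0..1::real}) (order_realization S)) (order_realization T) H"
  unfolding continuous_map_def
proof (intro conjI allI impI)
  show "H \<in> topspace (prod_topology (top_of_set {0..1::real}) (order_realization S)) \<rightarrow> topspace (order_realization T)"
  proof
    fix p assume "p \<in> topspace (prod_topology (top_of_set {0..1::real}) (order_realization S))"
    then obtain t \<alpha> where p: "p = (t, \<alpha>)" "t \<in> {0..1}" "\<alpha> \<in> realization_points S" by auto
    obtain \<tau> where "H ` ({0..1} \<times> closed_cell S (supp \<alpha>)) \<subseteq> supported_points T \<tau>"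
      using bounded realization_pointsD(2)[OF p(3)] by blast
    then have "H p \<in> supported_points T \<tau>" using p realization_pointsD(5)[OF p(3)] by blast
    then show "H p \<in> topspace (order_realization T)" by (simp add: supported_points_def)
  qed
  fix U assume U: "openin (order_realization T) U"
  let ?P = "{p \<in> topspace (prod_topology (top_of_set {0..1::real}) (order_realization S)). H p \<in> U}"
  show "openin (prod_topology (top_of_set {0..1::real}) (order_realization S)) ?P"
  proof (rule openin_interval_prod_order_realization)
    show "?P \<subseteq> {0..1} \<times> realization_points S" by auto
    fix \<sigma> assume \<sigma>: "is_simplex S \<sigma>"
    let ?D = "{0..1} \<times> closed_cell S \<sigma>"
    obtain \<tau> where "finite \<tau>" and image: "H ` ?D \<subseteq> supported_points T \<tau>" using bounded[OF \<sigma>] by blast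
    have "H \<in> ?D \<rightarrow> supported_points T \<tau>" using image by blast
    then have "openin (top_of_set ?D) (?D \<inter> H -` (U \<inter> supported_points T \<tau>))"
      using cont[OF \<sigma>] openin_supported_points[OF \<open>finite \<tau>\<close> U]
      unfolding continuous_on_open_gen[OF \<open>H \<in> ?D \<rightarrow> supported_points T \<tau>\<close>] by blast
    moreover have "?D \<inter> H -` (U \<inter> supported_points T \<tau>) = ?P \<inter> ?D"
      using image closed_cell_subset by auto
    ultimately show "openin (top_of_set ?D) (?P \<inter> ?D)" by simp
  qed
qed

section \<open>Maps induced by monotone maps and their homotopies\<close>

definition pushforward :: "('a \<Rightarrow> 'b) \<Rightarrow> 'a set \<Rightarrow> ('a \<Rightarrow> real) \<Rightarrow> 'b \<Rightarrow> real" where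
  "pushforward g A \<beta> w = (\<Sum>z\<in>A. if g z = w then \<beta> z else 0)"

lemma pushforward_nonneg: "(\<And>z. z \<in> A \<Longrightarrow> 0 \<le> \<beta> z) \<Longrightarrow> 0 \<le> pushforward g A \<beta> w"
  unfolding pushforward_def by (intro sum_nonneg) auto

lemma pushforward_nonzeroD:
  assumes "pushforward g A \<beta> w \<noteq> 0"
  shows "\<exists>z\<in>A. g z = w \<and> \<beta> z \<noteq> 0"
proof (rule ccontr)
  assume "\<not> ?thesis"
  then have "(\<Sum>z\<in>A. if g z = w then \<beta> z else 0) = 0" by (intro sum.neutral) auto
  with assms show False by (simp add: pushforward_def)
qed

lemma sum_pushforward:
  assumes "finite A" "finite B" "g ` A \<subseteq> B"
  shows "(\<Sum>w\<in>B. pushforward g A \<beta> w) = sum \<beta> A"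
proof -
  have "(\<Sum>w\<in>B. pushforward g A \<beta> w) = (\<Sum>z\<in>A. \<Sum>w\<in>B. if g z = w then \<beta> z else 0)"
    unfolding pushforward_def by (rule sum.swap)
  also have "\<dots> = sum \<beta> A"
  proof (rule sum.cong)
    fix z assume "z \<in> A"
    then have "g z \<in> B" using assms(3) by blast
    then show "(\<Sum>w\<in>B. if g z = w then \<beta> z else 0) = \<beta> z" by (simp add: sum.delta'[OF assms(2)])
  qed simp
  finally show ?thesis .
qed

lemma pushforward_add:
  "pushforward g A \<beta> w + pushforward g A \<gamma> w = pushforward g A (\<lambda>z. \<beta> z + \<gamma> z) w"
  unfolding pushforward_def sum.distrib[symmetric] by (intro sum.cong) auto

lemma pushforward_superset:
  assumes "finite B" "A \<subseteq> B" "\<And>z. z \<in> B - A \<Longrightarrow> \<beta> z = 0"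
  shows "pushforward g A \<beta> = pushforward g B \<beta>"
  unfolding pushforward_def using assms by (intro ext sum.mono_neutral_left) auto

lemma continuous_on_pushforward:
  assumes "\<And>z. continuous_on D (\<lambda>p. \<beta> p z)"
  shows "continuous_on D (\<lambda>p. pushforward g A (\<beta> p) w)"
  unfolding pushforward_def
proof (intro continuous_on_sum)
  fix z show "continuous_on D (\<lambda>p. if g z = w then \<beta> p z else 0)"
    using assms by (cases "g z = w") auto
qed

definition induced_map :: "('a \<Rightarrow> 'b) \<Rightarrow> ('a \<Rightarrow> real) \<Rightarrow> 'b \<Rightarrow> real" where
  "induced_map g \<alpha> = pushforward g (supp \<alpha>) \<alpha>"

lemma induced_map_id:
  assumes "finite (supp \<beta>)"
  shows "induced_map id \<beta> = \<beta>"
proof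
  fix w show "induced_map id \<beta> w = \<beta> w"
    unfolding induced_map_def pushforward_def id_apply sum.delta[OF assms] by simp
qed

lemma induced_map_cong: "(\<And>z. \<beta> z \<noteq> 0 \<Longrightarrow> g z = g' z) \<Longrightarrow> induced_map g \<beta> = induced_map g' \<beta>"
  unfolding induced_map_def pushforward_def by (intro ext sum.cong) auto

lemma induced_map_const:
  assumes "sum \<beta> (supp \<beta>) = 1"
  shows "induced_map (\<lambda>_. c) \<beta> = (\<lambda>w. if w = c then 1 else 0)"
proof
  fix w show "induced_map (\<lambda>_. c) \<beta> w = (if w = c then 1 else 0)"
    unfolding induced_map_def pushforward_def using assms by (cases "w = c") simp_all
qed

lemma vertex_in_realization_points:
  assumes "c \<in> S"
  shows "(\<lambda>w. if w = c then 1 else 0) \<in> realization_points S"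
proof -
  have "{z. (if z = c then 1 else 0 :: real) \<noteq> 0} = {c}" by auto
  then show ?thesis using assms by (simp add: realization_points_def is_simplex_def)
qed

definition mass_below :: "('a::order \<Rightarrow> real) \<Rightarrow> 'a \<Rightarrow> real" where
  "mass_below \<alpha> z = sum \<alpha> {w. \<alpha> w \<noteq> 0 \<and> w < z}"

lemma mass_below_nonneg: "(\<And>w. 0 \<le> \<alpha> w) \<Longrightarrow> 0 \<le> mass_below \<alpha> z"
  unfolding mass_below_def by (intro sum_nonneg) auto

lemma mass_below_add_le:
  assumes "\<And>w. 0 \<le> \<alpha> w" "finite B" "b \<in> B" "{w. \<alpha> w \<noteq> 0 \<and> w < b} \<subseteq> B"
  shows "mass_below \<alpha> b + \<alpha> b \<le> sum \<alpha> B"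
proof -
  have "finite {w. \<alpha> w \<noteq> 0 \<and> w < b}" using assms(2,4) by (rule finite_subset[rotated])
  then have "mass_below \<alpha> b + \<alpha> b = sum \<alpha> ({w. \<alpha> w \<noteq> 0 \<and> w < b} \<union> {b})"
    unfolding mass_below_def by (subst sum.union_disjoint) auto
  also have "\<dots> \<le> sum \<alpha> B" using assms by (intro sum_mono2) auto
  finally show ?thesis .
qed

definition lower_share :: "real \<Rightarrow> ('a::order \<Rightarrow> real) \<Rightarrow> 'a \<Rightarrow> real" where
  "lower_share t \<alpha> z = min (\<alpha> z) (max 0 (t - mass_below \<alpha> z))"

lemma lower_share_bounds: "0 \<le> \<alpha> z \<Longrightarrow> 0 \<le> lower_share t \<alpha> z \<and> lower_share t \<alpha> z \<le> \<alpha> z"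
  unfolding lower_share_def by auto

lemma lower_share_0:
  assumes "\<And>w. 0 \<le> \<alpha> w"
  shows "lower_share 0 \<alpha> z = 0"
  unfolding lower_share_def using assms[of z] mass_below_nonneg[of \<alpha> z, OF assms] by (simp add: min_def)

lemma lower_share_1:
  assumes "\<alpha> \<in> realization_points S"
  shows "lower_share 1 \<alpha> z = \<alpha> z"
proof (cases "\<alpha> z = 0")
  case False
  have "mass_below \<alpha> z + \<alpha> z \<le> sum \<alpha> (supp \<alpha>)"
    using False realization_pointsD[OF assms] by (intro mass_below_add_le) auto
  then show ?thesis
    using realization_pointsD[OF assms] unfolding lower_share_def by simp
qed (simp add: lower_share_def)

text \<open>The shares of mass below level \<open>t\<close> occupy an initial segment of the chain.\<close>

lemma lower_share_separates:
  assumes \<alpha>: "\<alpha> \<in> realization_points S" and "\<alpha> a \<noteq> 0" "\<alpha> b \<noteq> 0"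
    and a: "lower_share t \<alpha> a \<noteq> 0" and b: "lower_share t \<alpha> b \<noteq> \<alpha> b"
  shows "a \<le> b"
proof (rule ccontr)
  assume "\<not> a \<le> b"
  with realization_pointsD(2)[OF \<alpha>] assms(2,3) have "b < a"
    unfolding is_simplex_def by (auto simp: less_le)
  have "mass_below \<alpha> b + \<alpha> b \<le> sum \<alpha> {w. \<alpha> w \<noteq> 0 \<and> w < a}"
    using realization_pointsD[OF \<alpha>] \<open>b < a\<close> \<open>\<alpha> b \<noteq> 0\<close>
    by (intro mass_below_add_le) (auto intro: finite_subset dest: order.strict_trans)
  then have "mass_below \<alpha> b + \<alpha> b \<le> mass_below \<alpha> a" by (simp add: mass_below_def)
  moreover have "mass_below \<alpha> a < t"
    using a realization_pointsD(1)[OF \<alpha>, of a] unfolding lower_share_def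
    by (auto simp: min_def max_def split: if_splits)
  moreover have "t - mass_below \<alpha> b < \<alpha> b"
    using b unfolding lower_share_def by (auto simp: min_def max_def split: if_splits)
  ultimately show False by simp
qed

text \<open>At time \<open>t\<close> the first \<open>t\<close> units of the mass of \<open>\<alpha>\<close>, counted upwards along its chain,
  are pushed forward by \<open>g\<close> and the remaining mass by \<open>h\<close>: time \<open>0\<close> gives \<open>|h|\<close>, time \<open>1\<close>
  gives \<open>|g|\<close>, and \<open>g \<le> h\<close> keeps the image supported on a chain.\<close>

definition order_homotopy ::
    "('a::order \<Rightarrow> 'b) \<Rightarrow> ('a \<Rightarrow> 'b) \<Rightarrow> real \<times> ('a \<Rightarrow> real) \<Rightarrow> 'b \<Rightarrow> real" where
  "order_homotopy g h p w =
     pushforward g (supp (snd p)) (lower_share (fst p) (snd p)) w +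
     pushforward h (supp (snd p)) (\<lambda>z. snd p z - lower_share (fst p) (snd p) z) w"

lemma order_homotopy_same: "order_homotopy g g p = induced_map g (snd p)"
  unfolding order_homotopy_def induced_map_def pushforward_add by simp

lemma order_homotopy_0:
  assumes "\<alpha> \<in> realization_points S"
  shows "order_homotopy g h (0, \<alpha>) = induced_map h \<alpha>"
proof
  fix w show "order_homotopy g h (0, \<alpha>) w = induced_map h \<alpha> w"
    by (simp only: order_homotopy_def induced_map_def pushforward_def fst_conv snd_conv
        lower_share_0[OF realization_pointsD(1)[OF assms]] diff_zero if_cancel sum.neutral_const
        add_0_left)
qed

lemma order_homotopy_1:
  assumes "\<alpha> \<in> realization_points S"
  shows "order_homotopy g h (1, \<alpha>) = induced_map g \<alpha>"
proof
  fix w show "order_homotopy g h (1, \<alpha>) w = induced_map g \<alpha> w"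
    by (simp only: order_homotopy_def induced_map_def pushforward_def fst_conv snd_conv
        lower_share_1[OF assms] diff_self if_cancel sum.neutral_const add_0_right)
qed

lemma order_homotopy_nonzeroD:
  assumes "order_homotopy g h (t, \<alpha>) w \<noteq> 0"
  shows "(\<exists>a. \<alpha> a \<noteq> 0 \<and> g a = w \<and> lower_share t \<alpha> a \<noteq> 0) \<or>
    (\<exists>b. \<alpha> b \<noteq> 0 \<and> h b = w \<and> lower_share t \<alpha> b \<noteq> \<alpha> b)"
proof -
  have "pushforward g (supp \<alpha>) (lower_share t \<alpha>) w \<noteq> 0 \<or>
      pushforward h (supp \<alpha>) (\<lambda>z. \<alpha> z - lower_share t \<alpha> z) w \<noteq> 0"
    using assms unfolding order_homotopy_def fst_conv snd_conv by auto
  then show ?thesis by (auto dest!: pushforward_nonzeroD)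
qed

lemma support_order_homotopy:
  "supp (order_homotopy g h (t, \<alpha>)) \<subseteq> g ` supp \<alpha> \<union> h ` supp \<alpha>"
proof
  fix w assume "w \<in> supp (order_homotopy g h (t, \<alpha>))"
  then have "(\<exists>a\<in>supp \<alpha>. w = g a) \<or> (\<exists>b\<in>supp \<alpha>. w = h b)"
    using order_homotopy_nonzeroD[of g h t \<alpha> w] by auto
  then show "w \<in> g ` supp \<alpha> \<union> h ` supp \<alpha>" by (simp only: Un_iff image_iff)
qed

lemma sum_order_homotopy:
  assumes "finite (supp \<alpha>)"
  shows "sum (order_homotopy g h (t, \<alpha>)) (supp (order_homotopy g h (t, \<alpha>))) = sum \<alpha> (supp \<alpha>)"
proof -
  have "sum (order_homotopy g h (t, \<alpha>)) (supp (order_homotopy g h (t, \<alpha>))) =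
      sum (order_homotopy g h (t, \<alpha>)) (g ` supp \<alpha> \<union> h ` supp \<alpha>)"
    using assms support_order_homotopy[of g h t \<alpha>] by (intro sum.mono_neutral_left) auto
  also have "\<dots> = sum (lower_share t \<alpha>) (supp \<alpha>) + (\<Sum>z\<in>supp \<alpha>. \<alpha> z - lower_share t \<alpha> z)"
    unfolding order_homotopy_def fst_conv snd_conv sum.distrib
    using assms by (simp add: sum_pushforward[OF assms])
  also have "\<dots> = sum \<alpha> (supp \<alpha>)"
    by (simp add: sum.distrib[symmetric])
  finally show ?thesis .
qed

lemma order_homotopy_in_realization_points:
  assumes g: "mono_on S g" and h: "mono_on S h" and gh: "\<And>z. z \<in> S \<Longrightarrow> g z \<le> h z"
    and gT: "g ` S \<subseteq> T" and hT: "h ` S \<subseteq> T"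
    and \<alpha>: "\<alpha> \<in> realization_points S"
  shows "order_homotopy g h (t, \<alpha>) \<in> realization_points T"
proof -
  define \<beta> where "\<beta> = order_homotopy g h (t, \<alpha>)"
  note source = order_homotopy_nonzeroD[of g h t \<alpha>, folded \<beta>_def]
  have supp: "supp \<beta> \<subseteq> g ` supp \<alpha> \<union> h ` supp \<alpha>"
    unfolding \<beta>_def by (rule support_order_homotopy)
  have fin: "finite (supp \<alpha>)" and "supp \<alpha> \<subseteq> S"
    and chain: "\<And>a b. \<alpha> a \<noteq> 0 \<Longrightarrow> \<alpha> b \<noteq> 0 \<Longrightarrow> a \<le> b \<or> b \<le> a"
    using realization_pointsD(2,3)[OF \<alpha>] unfolding is_simplex_def by auto
  have lower_upper: "g a \<le> h b"
    if "\<alpha> a \<noteq> 0" "\<alpha> b \<noteq> 0" "lower_share t \<alpha> a \<noteq> 0" "lower_share t \<alpha> b \<noteq> \<alpha> b" for a b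
  proof -
    have "a \<le> b" using lower_share_separates[OF \<alpha>] that .
    then have "g a \<le> g b" using g \<open>supp \<alpha> \<subseteq> S\<close> that by (auto intro: mono_onD)
    also have "g b \<le> h b" using gh \<open>supp \<alpha> \<subseteq> S\<close> that by blast
    finally show ?thesis .
  qed
  have mono_pair: "k a \<le> k b \<or> k b \<le> k a" if "mono_on S k" "\<alpha> a \<noteq> 0" "\<alpha> b \<noteq> 0" for k a b
    using chain[OF that(2,3)] mono_onD[OF that(1)] \<open>supp \<alpha> \<subseteq> S\<close> that(2,3) by blast
  have "w1 \<le> w2 \<or> w2 \<le> w1" if w1: "\<beta> w1 \<noteq> 0" and w2: "\<beta> w2 \<noteq> 0" for w1 w2
  proof -
    obtain a1 where "\<alpha> a1 \<noteq> 0"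
      "w1 = g a1 \<and> lower_share t \<alpha> a1 \<noteq> 0 \<or> w1 = h a1 \<and> lower_share t \<alpha> a1 \<noteq> \<alpha> a1"
      using source[OF w1] by blast
    moreover obtain a2 where "\<alpha> a2 \<noteq> 0"
      "w2 = g a2 \<and> lower_share t \<alpha> a2 \<noteq> 0 \<or> w2 = h a2 \<and> lower_share t \<alpha> a2 \<noteq> \<alpha> a2"
      using source[OF w2] by blast
    ultimately show ?thesis
      using lower_upper[of a1 a2] lower_upper[of a2 a1] mono_pair[OF g, of a1 a2] mono_pair[OF h, of a1 a2]
      by auto
  qed
  moreover have one: "sum \<beta> (supp \<beta>) = 1"
    unfolding \<beta>_def using sum_order_homotopy[OF fin] realization_pointsD(4)[OF \<alpha>] by simp
  moreover have "supp \<beta> \<noteq> {}" using one by (metis sum.empty zero_neq_one)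
  moreover have "finite (supp \<beta>)" using finite_subset[OF supp] fin by simp
  moreover have "supp \<beta> \<subseteq> T" using supp gT hT \<open>supp \<alpha> \<subseteq> S\<close> by blast
  moreover have "0 \<le> \<beta> w" for w
  proof -
    have "0 \<le> lower_share t \<alpha> z" "0 \<le> \<alpha> z - lower_share t \<alpha> z" for z
      using lower_share_bounds[of \<alpha> z t] realization_pointsD(1)[OF \<alpha>, of z] by auto
    then show ?thesis unfolding \<beta>_def order_homotopy_def by (simp add: pushforward_nonneg)
  qed
  ultimately show ?thesis
    unfolding \<beta>_def realization_points_def is_simplex_def by blast
qed

lemma order_homotopy_on_closed_cell:
  assumes \<sigma>: "is_simplex S \<sigma>" and \<alpha>: "\<alpha> \<in> closed_cell S \<sigma>"
  shows "order_homotopy g h (t, \<alpha>) = (\<lambda>w.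
      pushforward g \<sigma> (\<lambda>z. min (\<alpha> z) (max 0 (t - (\<Sum>v\<in>{v\<in>\<sigma>. v < z}. \<alpha> v)))) w +
      pushforward h \<sigma> (\<lambda>z. \<alpha> z - min (\<alpha> z) (max 0 (t - (\<Sum>v\<in>{v\<in>\<sigma>. v < z}. \<alpha> v)))) w)"
proof -
  have fin: "finite \<sigma>" using \<sigma> by (simp add: is_simplex_def)
  have sub: "supp \<alpha> \<subseteq> \<sigma>" using closed_cellD(2)[OF \<alpha>] .
  have share: "lower_share t \<alpha> = (\<lambda>z. min (\<alpha> z) (max 0 (t - (\<Sum>v\<in>{v\<in>\<sigma>. v < z}. \<alpha> v))))"
  proof
    fix z
    have "mass_below \<alpha> z = (\<Sum>v\<in>{v\<in>\<sigma>. v < z}. \<alpha> v)"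
      unfolding mass_below_def using fin sub by (intro sum.mono_neutral_left) auto
    then show "lower_share t \<alpha> z = min (\<alpha> z) (max 0 (t - (\<Sum>v\<in>{v\<in>\<sigma>. v < z}. \<alpha> v)))"
      by (simp add: lower_share_def)
  qed
  have "lower_share t \<alpha> z = 0" if "z \<in> \<sigma> - supp \<alpha>" for z
    using that by (simp add: lower_share_def)
  then have "pushforward g (supp \<alpha>) (lower_share t \<alpha>) = pushforward g \<sigma> (lower_share t \<alpha>)"
    and "pushforward h (supp \<alpha>) (\<lambda>z. \<alpha> z - lower_share t \<alpha> z) =
      pushforward h \<sigma> (\<lambda>z. \<alpha> z - lower_share t \<alpha> z)"
    using fin sub by (auto intro!: pushforward_superset)
  then show ?thesis
    unfolding order_homotopy_def fst_conv snd_conv by (simp only: share)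
qed

lemma continuous_on_snd_coordinate [continuous_intros]:
  "continuous_on A (\<lambda>p::'c::topological_space \<times> ('a \<Rightarrow> real). snd p z)"
  by (intro continuous_on_compose2[OF continuous_on_coordinate continuous_on_snd]) auto

lemma continuous_on_order_homotopy_closed_cell:
  assumes "is_simplex S \<sigma>"
  shows "continuous_on ({0..1::real} \<times> closed_cell S \<sigma>) (order_homotopy g h)"
proof (rule continuous_on_eq)
  show "continuous_on ({0..1::real} \<times> closed_cell S \<sigma>) (\<lambda>p w.
      pushforward g \<sigma> (\<lambda>z. min (snd p z) (max 0 (fst p - (\<Sum>v\<in>{v\<in>\<sigma>. v < z}. snd p v)))) w +
      pushforward h \<sigma> (\<lambda>z. snd p z - min (snd p z) (max 0 (fst p - (\<Sum>v\<in>{v\<in>\<sigma>. v < z}. snd p v)))) w)"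
    by (intro continuous_on_coordinatewise_then_product continuous_on_add continuous_on_pushforward
        continuous_intros)
  fix p :: "real \<times> ('a \<Rightarrow> real)" assume "p \<in> {0..1} \<times> closed_cell S \<sigma>"
  then show "(\<lambda>w.
      pushforward g \<sigma> (\<lambda>z. min (snd p z) (max 0 (fst p - (\<Sum>v\<in>{v\<in>\<sigma>. v < z}. snd p v)))) w +
      pushforward h \<sigma> (\<lambda>z. snd p z - min (snd p z) (max 0 (fst p - (\<Sum>v\<in>{v\<in>\<sigma>. v < z}. snd p v)))) w)
      = order_homotopy g h p"
    using order_homotopy_on_closed_cell[OF assms, of "snd p" g h "fst p"] by auto
qed

lemma continuous_map_order_homotopy:
  assumes "mono_on S g" "mono_on S h" "\<And>z. z \<in> S \<Longrightarrow> g z \<le> h z" "g ` S \<subseteq> T" "h ` S \<subseteq> T"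
  shows "continuous_map (prod_topology (top_of_set {0..1::real}) (order_realization S))
    (order_realization T) (order_homotopy g h)"
proof (rule continuous_map_interval_prod_order_realization)
  fix \<sigma> assume \<sigma>: "is_simplex S \<sigma>"
  show "continuous_on ({0..1} \<times> closed_cell S \<sigma>) (order_homotopy g h)"
    using \<sigma> by (rule continuous_on_order_homotopy_closed_cell)
  have "order_homotopy g h (t, \<alpha>) \<in> supported_points T (g ` \<sigma> \<union> h ` \<sigma>)"
    if "\<alpha> \<in> closed_cell S \<sigma>" for t \<alpha>
    using order_homotopy_in_realization_points[OF assms closed_cellD(1)[OF that], of t]
      support_order_homotopy[of g h t \<alpha>] closed_cellD(2)[OF that]
    unfolding supported_points_def by blast
  then have "order_homotopy g h ` ({0..1} \<times> closed_cell S \<sigma>) \<subseteq> supported_points T (g ` \<sigma> \<union> h ` \<sigma>)"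
    by auto
  moreover have "finite (g ` \<sigma> \<union> h ` \<sigma>)" using \<sigma> by (simp add: is_simplex_def)
  ultimately show "\<exists>\<tau>. finite \<tau> \<and> order_homotopy g h ` ({0..1} \<times> closed_cell S \<sigma>) \<subseteq> supported_points T \<tau>"
    by blast
qed

lemma continuous_map_induced_map:
  assumes "mono_on S g" "g ` S \<subseteq> T"
  shows "continuous_map (order_realization S) (order_realization T) (induced_map g)"
proof -
  have "continuous_map (order_realization S) (order_realization T) (order_homotopy g g \<circ> Pair 0)"
    using continuous_map_order_homotopy[OF assms(1,1) order_refl assms(2,2)]
    by (rule continuous_map_compose[rotated]) (simp add: continuous_map_pairwise o_def)
  then show ?thesis by (simp add: o_def order_homotopy_same)
qed

lemma homotopic_induced_maps:
  assumes "mono_on S g" "mono_on S h" "\<And>z. z \<in> S \<Longrightarrow> g z \<le> h z" "g ` S \<subseteq> T" "h ` S \<subseteq> T"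
  shows "homotopic_with (\<lambda>_. True) (order_realization S) (order_realization T)
    (induced_map g) (induced_map h)"
proof (rule homotopic_with_symD)
  show "homotopic_with (\<lambda>_. True) (order_realization S) (order_realization T)
      (induced_map h) (induced_map g)"
    unfolding homotopic_with[where P = "\<lambda>_. True", simplified]
  proof (intro exI conjI ballI)
    show "continuous_map (prod_topology (top_of_set {0..1}) (order_realization S))
        (order_realization T) (order_homotopy g h)"
      using assms by (rule continuous_map_order_homotopy)
  qed (simp_all add: order_homotopy_0 order_homotopy_1)
qed

section \<open>Deflations and cones\<close>

lemma homotopic_induced_map_id:
  "homotopic_with (\<lambda>_. True) (order_realization S) (order_realization S) (induced_map id) id"
proof (rule homotopic_with_equal)
  show "continuous_map (order_realization S) (order_realization S) (induced_map id)"
    by (rule continuous_map_induced_map[OF mono_on_id]) simp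
  fix \<beta> assume "\<beta> \<in> topspace (order_realization S)"
  then show "induced_map id \<beta> = id \<beta>" by (simp add: induced_map_id realization_pointsD(3))
qed simp_all

lemma homotopy_equivalent_order_realization_deflation:
  assumes r: "mono_on S r" "r ` S \<subseteq> S'" and "S' \<subseteq> S"
    and below: "\<And>z. z \<in> S \<Longrightarrow> r z \<le> z" and fixed: "\<And>z. z \<in> S' \<Longrightarrow> r z = z"
  shows "order_realization S homotopy_equivalent_space order_realization S'"
proof (rule deformation_retraction_imp_homotopy_equivalent_space)
  have cont_r: "continuous_map (order_realization S) (order_realization S') (induced_map r)"
    using r by (rule continuous_map_induced_map)
  show "retraction_maps (order_realization S) (order_realization S') (induced_map r) (induced_map id)"
    unfolding retraction_maps_def
  proof (intro conjI ballI)
    show "continuous_map (order_realization S') (order_realization S) (induced_map id)"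
      using \<open>S' \<subseteq> S\<close> by (intro continuous_map_induced_map mono_on_id) auto
    fix \<beta> assume "\<beta> \<in> topspace (order_realization S')"
    then have \<beta>: "\<beta> \<in> realization_points S'" by simp
    then have "\<beta> z \<noteq> 0 \<Longrightarrow> r z = id z" for z
      using realization_pointsD(2)[OF \<beta>] fixed by (auto simp: is_simplex_def)
    then show "induced_map r (induced_map id \<beta>) = \<beta>"
      using induced_map_cong[of \<beta> r id] induced_map_id[OF realization_pointsD(3)[OF \<beta>]] by simp
  qed (rule cont_r)
  have "homotopic_with (\<lambda>_. True) (order_realization S) (order_realization S)
      (induced_map r) (induced_map id)"
    using r \<open>S' \<subseteq> S\<close> below by (intro homotopic_induced_maps mono_on_id) auto
  then show "homotopic_with (\<lambda>_. True) (order_realization S) (order_realization S)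
      (induced_map id \<circ> induced_map r) id"
  proof (rule homotopic_with_eq)
    fix \<alpha> assume "\<alpha> \<in> topspace (order_realization S)"
    then have "induced_map r \<alpha> \<in> realization_points S'"
      using continuous_map_image_subset_topspace[OF cont_r] by auto
    then show "(induced_map id \<circ> induced_map r) \<alpha> = induced_map r \<alpha>"
      by (simp add: induced_map_id realization_pointsD(3))
  next
    fix \<alpha> assume "\<alpha> \<in> topspace (order_realization S)"
    then show "id \<alpha> = induced_map id \<alpha>" by (simp add: induced_map_id realization_pointsD(3))
  qed simp
qed

lemma contractible_space_order_realization_cone:
  assumes "c \<in> S" and g: "mono_on S g" "g ` S \<subseteq> S"
    and below: "\<And>z. z \<in> S \<Longrightarrow> g z \<le> z" and apex: "\<And>z. z \<in> S \<Longrightarrow> g z \<le> c"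
  shows "contractible_space (order_realization S)"
  unfolding contractible_space_def
proof
  have "homotopic_with (\<lambda>_. True) (order_realization S) (order_realization S)
      (induced_map g) (induced_map id)"
    using g below by (intro homotopic_induced_maps mono_on_id) auto
  then have "homotopic_with (\<lambda>_. True) (order_realization S) (order_realization S)
      id (induced_map g)"
    using homotopic_with_trans[OF homotopic_with_symD[OF homotopic_induced_map_id]
        homotopic_with_symD] by blast
  moreover have "homotopic_with (\<lambda>_. True) (order_realization S) (order_realization S)
      (induced_map g) (induced_map (\<lambda>_. c))"
    using g apex \<open>c \<in> S\<close> by (intro homotopic_induced_maps mono_on_const) auto
  ultimately have "homotopic_with (\<lambda>_. True) (order_realization S) (order_realization S)
      id (induced_map (\<lambda>_. c))"
    by (rule homotopic_with_trans)
  then show "homotopic_with (\<lambda>_. True) (order_realization S) (order_realization S)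
      id (\<lambda>_. (\<lambda>w. if w = c then 1 else 0))"
  proof (rule homotopic_with_eq)
    fix \<alpha> assume "\<alpha> \<in> topspace (order_realization S)"
    then show "(\<lambda>w. if w = c then 1 else 0) = induced_map (\<lambda>_. c) \<alpha>"
      by (simp add: induced_map_const realization_pointsD(4))
  qed simp_all
qed

lemma contractible_space_imp_homotopy_equivalent_point:
  assumes "contractible_space X" "topspace X \<noteq> {}"
  shows "X homotopy_equivalent_space discrete_topology {()}"
proof -
  obtain a where "a \<in> topspace X" and a: "homotopic_with (\<lambda>_. True) X X id (\<lambda>_. a)"
    using assms by (auto simp: contractible_space)
  show ?thesis
    unfolding homotopy_equivalent_space_def
  proof (intro exI conjI)
    show "continuous_map (discrete_topology {()}) X (\<lambda>_. a)" using \<open>a \<in> topspace X\<close> by simp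
    show "homotopic_with (\<lambda>_. True) X X ((\<lambda>_. a) \<circ> (\<lambda>_. ())) id"
      using homotopic_with_symD[OF a] by (simp add: o_def)
    show "homotopic_with (\<lambda>_. True) (discrete_topology {()}) (discrete_topology {()})
        ((\<lambda>_. ()) \<circ> (\<lambda>_. a)) id"
      by (rule homotopic_with_equal) auto
  qed simp
qed

lemma less_image_of_singleton_fiber:
  assumes "mono f" "f -` {x} = {x}" "x < z"
  shows "x < f z"
proof -
  have "x = f x" using assms(2) by auto
  also have "\<dots> \<le> f z" using assms(1,3) by (simp add: monoD)
  finally have "x \<le> f z" .
  moreover have "f z \<noteq> x"
  proof
    assume "f z = x"
    then have "z \<in> f -` {x}" by simp
    with assms(2,3) show False by simp
  qed
  ultimately show ?thesis by simp
qed

theorem lemma2p7: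
  fixes f :: "'a::order \<Rightarrow> 'a" and x y :: 'a
  assumes "mono f"
    and "\<And>z. f z \<le> z"
    and "f \<circ> f = f"
    and "x < y"
    and "f -` {x} = {x}"
  shows "(y \<in> Fix f \<longrightarrow>
           order_realization {x<..<y} homotopy_equivalent_space
           order_realization ({x<..<y} \<inter> Fix f))
       \<and> (y \<notin> Fix f \<longrightarrow>
           order_realization {x<..<y} homotopy_equivalent_space discrete_topology {()})"
proof -
  have above: "x < f z" if "x < z" for z using assms(1,5) that by (rule less_image_of_singleton_fiber)
  have f_interval: "f ` {x<..<y} \<subseteq> {x<..<y}" using above by (auto intro: order.strict_trans1[OF assms(2)])
  have mono_interval: "mono_on {x<..<y} f" using assms(1) by (rule mono_imp_mono_on)
  show ?thesis
  proof (intro conjI impI)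
    have "f (f z) = f z" for z using fun_cong[OF assms(3), of z] by simp
    then show "order_realization {x<..<y} homotopy_equivalent_space
        order_realization ({x<..<y} \<inter> Fix f)"
      using mono_interval f_interval assms(2)
      by (intro homotopy_equivalent_order_realization_deflation[where r = f]) (auto simp: Fix_def)
  next
    assume "y \<notin> Fix f"
    then have "f y \<in> {x<..<y}" using assms(2)[of y] above[OF assms(4)] by (auto simp: Fix_def less_le)
    then have "contractible_space (order_realization {x<..<y})"
      using mono_interval f_interval assms(1,2)
      by (intro contractible_space_order_realization_cone[of "f y"]) (auto simp: monoD)
    moreover have "topspace (order_realization {x<..<y}) \<noteq> {}"
      using vertex_in_realization_points[OF \<open>f y \<in> {x<..<y}\<close>] by auto
    ultimately show "order_realization {x<..<y} homotopy_equivalent_space discrete_topology {()}"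
      by (rule contractible_space_imp_homotopy_equivalent_point)
  qed
qed

end
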